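(* Let $b\in C^1([0,\infty))$ satisfy $b(t)>0$ for all $t\ge0$ and $\limsup_{t\to\infty}\frac{|b'(t)|}{b(t)^2}<1$. Then $$B_0:=\int_0^\infty\exp\Big(-\int_0^sb(\sigma)\,d\sigma\Big)\,ds<\infty\quad\text{and}\quad \lim_{t\to\infty}\frac{1}{b(t)}\exp\Big(-\int_0^tb(\sigma)\,d\sigma\Big)=0.$$ Assume further that $1/b\notin L^1(0,\infty)$ and that there exist $\gamma>0$ and $C>0$ with $\frac{|b'(t)|}{b(t)^2}\le C(t+1)^{-\gamma}$ for $t>0$. Then $$\lim_{t\to\infty}\frac{1}{b(t)^2(B(t)+1)}=0,\qquad\text{where } B(t)=\int_0^t\frac{d\sigma}{b(\sigma)}.$$ *)

theory Defs
  imports "HOL-Analysis.Analysis"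
begin

end

theory Submission
  imports Defs
begin

(*
  Write E t = exp (- integral {0..t} b) and h = 1 / b, so that E' = - b E and h' = - b' / b^2.
  The Limsup hypothesis gives h' <= q < 1 eventually, hence (E h)' = E (h' - 1) <= - (1 - q) E:
  both E h and E h + (1 - q) * integral {0..t} E are eventually decreasing, and the latter
  bounds the integral of E.  If E h stayed above some eps > 0, then b <= E / eps would make
  integral {0..t} b bounded, so E would stay above a positive constant, which is impossible
  for an integrable function.  The last claim is l'Hopital's rule for h^2 / (B + 1): the
  quotient of the derivatives is 2 h h' / h = - 2 b' / b^2, which tends to 0 by the power decay
  hypothesis, while B tends to infinity because 1 / b is not integrable.
*)

lemma has_real_derivative_at_if_within_atLeast:
  assumes "(f has_real_derivative D) (at x within {a..})" and "a < x"
  shows "(f has_real_derivative D) (at x)"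
proof -
  have "at x within {a..} = at x"
    using \<open>a < x\<close> by (intro at_within_interior) auto
  with assms(1) show ?thesis by simp
qed

lemma has_real_derivative_integral_atLeast:
  fixes f :: "real \<Rightarrow> real"
  assumes "continuous_on {a..} f" and "a \<le> x"
  shows "((\<lambda>u. integral {a..u} f) has_real_derivative f x) (at x within {a..})"
proof -
  have "continuous_on {a..x+1} f"
    using assms(1) by (rule continuous_on_subset) auto
  then have "((\<lambda>u. integral {a..u} f) has_real_derivative f x) (at x within {a..x+1})"
    using assms(2) by (intro integral_has_real_derivative) auto
  moreover have "at x within {a..x+1} = at x within {a..}"
    by (rule at_within_nhd[of _ "{..<x+1}"]) auto
  ultimately show ?thesis by simp
qed

lemma DERIV_nonpos_imp_decreasing_atLeast:
  fixes f :: "real \<Rightarrow> real"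
  assumes "{a..} \<subseteq> S"
    and deriv: "\<And>x. a \<le> x \<Longrightarrow> (f has_real_derivative f' x) (at x within S)"
    and nonpos: "\<And>x. a < x \<Longrightarrow> f' x \<le> 0"
    and "a \<le> s" and "s \<le> t"
  shows "f t \<le> f s"
proof -
  have deriv_atLeast: "(f has_real_derivative f' x) (at x within {a..})" if "a \<le> x" for x
    using DERIV_subset deriv that assms(1) by blast
  have "(f has_real_derivative f' x) (at x within {s..t})" if "x \<in> {s..t}" for x
    using that \<open>a \<le> s\<close> by (intro DERIV_subset[OF deriv_atLeast]) auto
  then have "continuous_on {s..t} f"
    by (rule DERIV_continuous_on)
  moreover have "(f has_real_derivative f' x) (at x)" if "s < x" for x
    using that \<open>a \<le> s\<close>
    by (intro has_real_derivative_at_if_within_atLeast[where a = a] deriv_atLeast) auto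
  ultimately show ?thesis
    using DERIV_nonpos_imp_decreasing_open[of s t f] nonpos \<open>a \<le> s\<close> \<open>s \<le> t\<close> by force
qed

lemma integral_mono_upper_limit:
  fixes f :: "real \<Rightarrow> real"
  assumes "continuous_on {a..} f" and "\<And>x. a \<le> x \<Longrightarrow> 0 \<le> f x" and "s \<le> t"
  shows "integral {a..s} f \<le> integral {a..t} f"
  using assms
  by (intro integral_subset_le integrable_continuous_interval continuous_on_subset[OF assms(1)])
    auto

lemma integrable_on_atLeast_if_integrals_bounded:
  fixes f :: "real \<Rightarrow> real"
  assumes cont: "continuous_on {a..} f" and nonneg: "\<And>t. a \<le> t \<Longrightarrow> 0 \<le> f t"
    and bounded: "\<And>t. a \<le> t \<Longrightarrow> integral {a..t} f \<le> M"
  shows "f integrable_on {a..}"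
proof -
  define f_upto where "f_upto = (\<lambda>k::nat. \<lambda>x. if x \<in> {a..a + real k} then f x else 0)"
  define f_ext where "f_ext = (\<lambda>x. if x \<in> {a..} then f x else 0)"
  have integrable_upto: "f integrable_on {a..a + real k}" for k
    by (rule integrable_continuous_interval, rule continuous_on_subset[OF cont]) auto
  have "f_ext integrable_on UNIV \<and> ((\<lambda>k. integral UNIV (f_upto k)) \<longlonglongrightarrow> integral UNIV f_ext)"
  proof (rule monotone_convergence_increasing)
    show "f_upto k integrable_on UNIV" for k
      unfolding f_upto_def using integrable_upto integrable_restrict_UNIV by blast
    show "f_upto k x \<le> f_upto (Suc k) x" for k x
      unfolding f_upto_def using nonneg by auto
    show "(\<lambda>k. f_upto k x) \<longlonglongrightarrow> f_ext x" for x
    proof (rule tendsto_eventually)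
      obtain N :: nat where "x - a \<le> real N"
        using real_arch_simple by blast
      then have "\<forall>k\<ge>N. f_upto k x = f_ext x"
        unfolding f_upto_def f_ext_def by (auto simp: order_trans[OF _ of_nat_mono])
      then show "\<forall>\<^sub>F k in sequentially. f_upto k x = f_ext x"
        unfolding eventually_sequentially by blast
    qed
    have "integral UNIV (f_upto k) = integral {a..a + real k} f" for k
      unfolding f_upto_def by (rule integral_restrict_UNIV)
    moreover have "0 \<le> integral {a..a + real k} f" for k
      using integrable_upto nonneg by (intro integral_nonneg) auto
    ultimately show "bounded (range (\<lambda>k. integral UNIV (f_upto k)))"
      unfolding bounded_real using bounded by (intro exI[of _ M]) auto
  qed
  then show ?thesis
    unfolding f_ext_def using integrable_restrict_UNIV by blast
qed

lemma integrable_on_atLeast_imp_tail_lower_bound_nonpos: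
  fixes f :: "real \<Rightarrow> real"
  assumes integrable: "f integrable_on {a..}" and nonneg: "\<And>t. a \<le> t \<Longrightarrow> 0 \<le> f t"
    and "a \<le> b" and lower: "\<And>t. b \<le> t \<Longrightarrow> c \<le> f t"
  shows "c \<le> 0"
proof (rule ccontr)
  assume "\<not> c \<le> 0"
  obtain n :: nat where n: "integral {a..} f / c < real n"
    using reals_Archimedean2 by blast
  have "c * real n = integral {b..b + real n} (\<lambda>_. c)"
    by simp
  also have "\<dots> \<le> integral {b..b + real n} f"
    using \<open>a \<le> b\<close> lower by (intro integral_le integrable_on_subinterval[OF integrable]) auto
  also have "\<dots> \<le> integral {a..} f"
    using \<open>a \<le> b\<close> nonneg
    by (intro integral_subset_le integrable_on_subinterval[OF integrable] integrable) auto
  finally show False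
    using n \<open>\<not> c \<le> 0\<close> by (simp add: field_simps)
qed

lemma tendsto_zero_if_powr_decay:
  fixes f :: "real \<Rightarrow> real"
  assumes "0 < \<gamma>" and bound: "\<And>t. 0 < t \<Longrightarrow> \<bar>f t\<bar> \<le> C * (t + 1) powr (- \<gamma>)"
  shows "(f \<longlongrightarrow> 0) at_top"
proof (rule Lim_null_comparison)
  show "\<forall>\<^sub>F t in at_top. norm (f t) \<le> C * (t + 1) powr (- \<gamma>)"
    using eventually_gt_at_top[of 0] by eventually_elim (simp add: bound)
  have "LIM t at_top. t + 1 :> (at_top :: real filter)"
    using filterlim_tendsto_add_at_top[OF tendsto_const[of 1] filterlim_ident]
    by (simp add: add.commute)
  then have "((\<lambda>t. (t + 1) powr (- \<gamma>)) \<longlongrightarrow> 0) at_top"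
    using \<open>0 < \<gamma>\<close> by (intro tendsto_neg_powr) auto
  then show "((\<lambda>t. C * (t + 1) powr (- \<gamma>)) \<longlongrightarrow> 0) at_top"
    by (rule tendsto_mult_right_zero)
qed

locale positive_C1_on_halfline =
  fixes b b' :: "real \<Rightarrow> real"
  assumes has_deriv_b: "\<And>t. 0 \<le> t \<Longrightarrow> (b has_real_derivative b' t) (at t within {0..})"
    and b_pos: "\<And>t. 0 \<le> t \<Longrightarrow> 0 < b t"
begin

definition E :: "real \<Rightarrow> real"
  where "E t = exp (- integral {0..t} b)"

definition B :: "real \<Rightarrow> real"
  where "B t = integral {0..t} (\<lambda>\<sigma>. 1 / b \<sigma>)"

lemma continuous_on_b: "continuous_on {0..} b"
  using has_deriv_b by (intro DERIV_continuous_on) auto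

lemma continuous_on_recip_b: "continuous_on {0..} (\<lambda>t. 1 / b t)"
  using b_pos by (intro continuous_intros continuous_on_b) (auto simp: less_imp_neq[symmetric])

lemma has_deriv_integral_b:
  "0 \<le> t \<Longrightarrow> ((\<lambda>t. integral {0..t} b) has_real_derivative b t) (at t within {0..})"
  by (rule has_real_derivative_integral_atLeast[OF continuous_on_b])

lemma E_pos: "0 < E t"
  unfolding E_def by simp

lemma has_deriv_E: "0 \<le> t \<Longrightarrow> (E has_real_derivative - b t * E t) (at t within {0..})"
  unfolding E_def by (rule derivative_eq_intros has_deriv_integral_b refl | simp)+

lemma continuous_on_E: "continuous_on {0..} E"
  using has_deriv_E by (intro DERIV_continuous_on) auto

lemma has_deriv_integral_E:
  "0 \<le> t \<Longrightarrow> ((\<lambda>t. integral {0..t} E) has_real_derivative E t) (at t within {0..})"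
  by (rule has_real_derivative_integral_atLeast[OF continuous_on_E])

lemma has_deriv_recip_b:
  "0 \<le> t \<Longrightarrow> ((\<lambda>t. 1 / b t) has_real_derivative - b' t / (b t)\<^sup>2) (at t within {0..})"
  using b_pos[of t] by (auto intro!: derivative_eq_intros has_deriv_b simp: power2_eq_square)

lemma has_deriv_B: "0 \<le> t \<Longrightarrow> (B has_real_derivative 1 / b t) (at t within {0..})"
  unfolding B_def by (rule has_real_derivative_integral_atLeast[OF continuous_on_recip_b])

lemma has_deriv_E_div_b:
  assumes "0 \<le> t"
  shows "((\<lambda>t. E t / b t) has_real_derivative E t * (- b' t / (b t)\<^sup>2 - 1)) (at t within {0..})"
  using b_pos[OF assms]
  by (auto intro!: derivative_eq_intros has_deriv_E has_deriv_b assms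
      simp: field_simps power2_eq_square)

lemma integral_E_mono:
  assumes "s \<le> t"
  shows "integral {0..s} E \<le> integral {0..t} E"
  by (rule integral_mono_upper_limit[OF continuous_on_E _ assms]) (simp add: E_pos less_imp_le)

lemma B_mono:
  assumes "s \<le> t"
  shows "B s \<le> B t"
  unfolding B_def
  by (rule integral_mono_upper_limit[OF continuous_on_recip_b _ assms])
    (simp add: b_pos less_imp_le)

lemma B_tendsto_at_top:
  assumes "\<not> (\<lambda>t. 1 / b t) integrable_on {0..}"
  shows "filterlim B at_top at_top"
proof -
  have "\<exists>t\<ge>0. K < B t" for K
  proof (rule ccontr)
    assume "\<not> (\<exists>t\<ge>0. K < B t)"
    then have "(\<lambda>t. 1 / b t) integrable_on {0..}"
      using b_pos
      by (intro integrable_on_atLeast_if_integrals_bounded[OF continuous_on_recip_b, of K])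
        (auto simp: B_def not_less less_imp_le)
    with assms show False ..
  qed
  then show ?thesis
    unfolding filterlim_at_top eventually_at_top_linorder
    by (meson B_mono order.trans less_imp_le)
qed

lemma recip_b_sq_div_B_tendsto_zero:
  assumes slope: "((\<lambda>t. b' t / (b t)\<^sup>2) \<longlongrightarrow> 0) at_top"
    and not_integrable: "\<not> (\<lambda>t. 1 / b t) integrable_on {0..}"
  shows "((\<lambda>t. 1 / ((b t)\<^sup>2 * (B t + 1))) \<longlongrightarrow> 0) at_top"
proof -
  have "((\<lambda>t. (1 / b t)\<^sup>2 / (B t + 1)) \<longlongrightarrow> 0) at_top"
  proof (rule lhospital_at_top_at_top[where f' = "\<lambda>t. 2 * (1 / b t) * (- b' t / (b t)\<^sup>2)"
        and g' = "\<lambda>t. 1 / b t"])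
    show "filterlim (\<lambda>t. B t + 1) at_top at_top"
      using filterlim_tendsto_add_at_top[OF tendsto_const B_tendsto_at_top[OF not_integrable]]
      by (simp add: add.commute)
    show "\<forall>\<^sub>F t in at_top. 1 / b t \<noteq> 0"
      using eventually_ge_at_top[of 0] by eventually_elim (use b_pos in force)
    show "\<forall>\<^sub>F t in at_top.
        ((\<lambda>t. (1 / b t)\<^sup>2) has_real_derivative 2 * (1 / b t) * (- b' t / (b t)\<^sup>2)) (at t)"
      using eventually_gt_at_top[of 0] by eventually_elim
        (auto intro!: DERIV_cong[OF DERIV_power[OF
          has_real_derivative_at_if_within_atLeast[OF has_deriv_recip_b]]])
    show "\<forall>\<^sub>F t in at_top. ((\<lambda>t. B t + 1) has_real_derivative 1 / b t) (at t)"
      using eventually_gt_at_top[of 0] by eventually_elim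
        (auto intro!: derivative_eq_intros has_real_derivative_at_if_within_atLeast[OF has_deriv_B])
    have "\<forall>\<^sub>F t in at_top. - 2 * (b' t / (b t)\<^sup>2) = 2 * (1 / b t) * (- b' t / (b t)\<^sup>2) / (1 / b t)"
      using eventually_ge_at_top[of 0] by eventually_elim (use b_pos in auto)
    moreover have "((\<lambda>t. - 2 * (b' t / (b t)\<^sup>2)) \<longlongrightarrow> 0) at_top"
      using tendsto_mult_right_zero[OF slope] .
    ultimately show "((\<lambda>t. 2 * (1 / b t) * (- b' t / (b t)\<^sup>2) / (1 / b t)) \<longlongrightarrow> 0) at_top"
      by (rule Lim_transform_eventually[rotated])
  qed
  then show ?thesis
    by (simp add: power_one_over)
qed

end

(* Since (1 / b)' = - b' / b^2, the slope assumption says that 1 / b grows with slope at most q. *)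
locale reciprocal_slope_below_one = positive_C1_on_halfline +
  fixes q T :: real
  assumes q_less_1: "q < 1" and T_nonneg: "0 \<le> T"
    and recip_b_slope: "\<And>t. T \<le> t \<Longrightarrow> - b' t / (b t)\<^sup>2 \<le> q"
begin

lemma E_div_b_plus_integral_E_decreasing:
  assumes "T \<le> s" and "s \<le> t"
  shows "E t / b t + (1 - q) * integral {0..t} E \<le> E s / b s + (1 - q) * integral {0..s} E"
proof (rule DERIV_nonpos_imp_decreasing_atLeast[of T "{0..}"
      "\<lambda>x. E x / b x + (1 - q) * integral {0..x} E"
      "\<lambda>x. E x * (- b' x / (b x)\<^sup>2 - 1) + (1 - q) * E x"])
  show "((\<lambda>x. E x / b x + (1 - q) * integral {0..x} E) has_real_derivative
      E x * (- b' x / (b x)\<^sup>2 - 1) + (1 - q) * E x) (at x within {0..})" if "T \<le> x" for x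
    using that T_nonneg by (intro DERIV_add DERIV_cmult has_deriv_E_div_b has_deriv_integral_E) auto
  have slope_term_nonpos: "E x * (- b' x / (b x)\<^sup>2 - q) \<le> 0" if "T < x" for x
    using that recip_b_slope[of x] E_pos[of x]
    by (intro mult_nonneg_nonpos) (auto simp: less_imp_le)
  show "E x * (- b' x / (b x)\<^sup>2 - 1) + (1 - q) * E x \<le> 0" if "T < x" for x
    using slope_term_nonpos[OF that] by (simp add: algebra_simps)
qed (use assms T_nonneg in auto)

lemma E_div_b_decreasing:
  assumes "T \<le> s" and "s \<le> t"
  shows "E t / b t \<le> E s / b s"
proof -
  have "(1 - q) * integral {0..s} E \<le> (1 - q) * integral {0..t} E"
    using integral_E_mono[of s t] assms T_nonneg q_less_1 by (intro mult_left_mono) auto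
  then show ?thesis
    using E_div_b_plus_integral_E_decreasing[OF assms] by linarith
qed

lemma integral_E_bounded:
  assumes "0 \<le> t"
  shows "integral {0..t} E \<le> integral {0..T} E + E T / b T / (1 - q)"
proof (cases "t \<le> T")
  case True
  have "0 < E T / b T / (1 - q)"
    using E_pos b_pos T_nonneg q_less_1 by simp
  then show ?thesis
    using integral_E_mono[OF True] by linarith
next
  case False
  have "0 < E t / b t"
    using E_pos b_pos assms by simp
  then have "(1 - q) * integral {0..t} E \<le> E T / b T + (1 - q) * integral {0..T} E"
    using E_div_b_plus_integral_E_decreasing[of T t] False by linarith
  then have "(integral {0..t} E - integral {0..T} E) * (1 - q) \<le> E T / b T"
    by (simp add: algebra_simps)
  moreover have "0 < 1 - q"
    using q_less_1 by simp
  ultimately have "integral {0..t} E - integral {0..T} E \<le> E T / b T / (1 - q)"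
    by (simp only: pos_le_divide_eq)
  then show ?thesis
    by linarith
qed

lemma E_integrable: "E integrable_on {0..}"
  using E_pos integral_E_bounded
  by (intro integrable_on_atLeast_if_integrals_bounded[OF continuous_on_E]) (auto simp: less_imp_le)

lemma integral_b_bounded_if_E_div_b_bounded_below:
  assumes "0 < \<epsilon>" and E_div_b_ge: "\<And>t. T \<le> t \<Longrightarrow> \<epsilon> \<le> E t / b t" and "T \<le> t"
  shows "integral {0..t} b \<le> integral {0..T} b + integral {0..} E / \<epsilon>"
proof -
  have b_le: "b x \<le> E x / \<epsilon>" if "T \<le> x" for x
    using E_div_b_ge[OF that] that T_nonneg b_pos[of x] \<open>0 < \<epsilon>\<close>
    by (simp add: pos_le_divide_eq mult.commute)
  have "integral {0..t} b - integral {0..t} E / \<epsilon> \<le> integral {0..T} b - integral {0..T} E / \<epsilon>"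
  proof (rule DERIV_nonpos_imp_decreasing_atLeast[of T "{0..}"
        "\<lambda>x. integral {0..x} b - integral {0..x} E / \<epsilon>" "\<lambda>x. b x - E x / \<epsilon>"])
    show "((\<lambda>x. integral {0..x} b - integral {0..x} E / \<epsilon>) has_real_derivative b x - E x / \<epsilon>)
        (at x within {0..})" if "T \<le> x" for x
      using that T_nonneg
      by (intro DERIV_diff DERIV_cdivide has_deriv_integral_b has_deriv_integral_E) auto
    show "b x - E x / \<epsilon> \<le> 0" if "T < x" for x
      using b_le[of x] that by simp
  qed (use assms T_nonneg in auto)
  moreover have "integral {0..t} E / \<epsilon> \<le> integral {0..} E / \<epsilon>"
    using \<open>T \<le> t\<close> T_nonneg E_pos \<open>0 < \<epsilon>\<close>
    by (intro divide_right_mono integral_subset_le E_integrable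
        integrable_on_subinterval[OF E_integrable]) (auto simp: less_imp_le)
  moreover have "0 \<le> integral {0..T} E / \<epsilon>"
    using integral_E_mono[of 0 T] T_nonneg \<open>0 < \<epsilon>\<close> by simp
  ultimately show ?thesis
    by linarith
qed

lemma E_div_b_not_bounded_below:
  assumes "0 < \<epsilon>"
  shows "\<exists>t\<ge>T. E t / b t < \<epsilon>"
proof (rule ccontr)
  assume "\<not> (\<exists>t\<ge>T. E t / b t < \<epsilon>)"
  define K where "K = integral {0..T} b + integral {0..} E / \<epsilon>"
  have "integral {0..t} b \<le> K" if "T \<le> t" for t
    unfolding K_def using assms that \<open>\<not> (\<exists>t\<ge>T. E t / b t < \<epsilon>)\<close>
    by (intro integral_b_bounded_if_E_div_b_bounded_below) auto
  then have E_lower: "exp (- K) \<le> E t" if "T \<le> t" for t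
    using that by (simp add: E_def)
  have "exp (- K) \<le> 0"
    by (rule integrable_on_atLeast_imp_tail_lower_bound_nonpos[OF E_integrable _ T_nonneg E_lower])
      (simp add: E_pos less_imp_le)
  then show False
    by simp
qed

lemma E_div_b_tendsto_zero: "((\<lambda>t. E t / b t) \<longlongrightarrow> 0) at_top"
proof (rule tendstoI)
  fix \<epsilon> :: real
  assume "0 < \<epsilon>"
  then obtain t\<^sub>0 where "T \<le> t\<^sub>0" and "E t\<^sub>0 / b t\<^sub>0 < \<epsilon>"
    using E_div_b_not_bounded_below by blast
  then have "dist (E t / b t) 0 < \<epsilon>" if "t\<^sub>0 \<le> t" for t
    using that E_div_b_decreasing[of t\<^sub>0 t] E_pos[of t] b_pos[of t] T_nonneg by auto
  then show "\<forall>\<^sub>F t in at_top. dist (E t / b t) 0 < \<epsilon>"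
    unfolding eventually_at_top_linorder by blast
qed

end

lemma (in positive_C1_on_halfline) reciprocal_slope_below_one_if_Limsup_less_1:
  assumes "Limsup at_top (\<lambda>t. ereal (\<bar>b' t\<bar> / (b t)\<^sup>2)) < 1"
  obtains q T where "reciprocal_slope_below_one b b' q T"
proof -
  obtain q where "Limsup at_top (\<lambda>t. ereal (\<bar>b' t\<bar> / (b t)\<^sup>2)) < ereal q" and "q < 1"
    using ereal_dense2[OF assms] by auto
  then have "\<forall>\<^sub>F t in at_top. ereal (\<bar>b' t\<bar> / (b t)\<^sup>2) < ereal q"
    by (intro Limsup_lessD)
  then obtain T where T: "\<And>t. T \<le> t \<Longrightarrow> \<bar>b' t\<bar> / (b t)\<^sup>2 < q"
    unfolding eventually_at_top_linorder by auto
  have "reciprocal_slope_below_one b b' q (max T 0)"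
  proof unfold_locales
    fix t
    assume "max T 0 \<le> t"
    have "- b' t / (b t)\<^sup>2 \<le> \<bar>b' t\<bar> / (b t)\<^sup>2"
      by (intro divide_right_mono) auto
    then show "- b' t / (b t)\<^sup>2 \<le> q"
      using T[of t] \<open>max T 0 \<le> t\<close> by simp
  qed (use \<open>q < 1\<close> in auto)
  then show ?thesis
    by (rule that)
qed

theorem lemma2p1:
  fixes b b' :: "real \<Rightarrow> real"
  assumes deriv: "\<And>t. t \<ge> 0 \<Longrightarrow> (b has_real_derivative b' t) (at t within {0..})"
    and cont_deriv: "continuous_on {0..} b'"
    and pos: "\<And>t. t \<ge> 0 \<Longrightarrow> b t > 0"
    and limsup: "Limsup at_top (\<lambda>t. ereal (\<bar>b' t\<bar> / (b t)\<^sup>2)) < 1"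
  shows "(\<lambda>s. exp (- integral {0..s} b)) integrable_on {0..}
       \<and> ((\<lambda>t. exp (- integral {0..t} b) / b t) \<longlongrightarrow> 0) at_top
       \<and> ((\<not> (\<lambda>t. 1 / b t) integrable_on {0..}
            \<and> (\<exists>\<gamma>>0. \<exists>C>0. \<forall>t>0. \<bar>b' t\<bar> / (b t)\<^sup>2 \<le> C * (t + 1) powr (- \<gamma>)))
          \<longrightarrow> ((\<lambda>t. 1 / ((b t)\<^sup>2 * (integral {0..t} (\<lambda>\<sigma>. 1 / b \<sigma>) + 1))) \<longlongrightarrow> 0) at_top)"
proof -
  interpret positive_C1_on_halfline b b'
    using deriv pos by unfold_locales
  obtain q T where "reciprocal_slope_below_one b b' q T"
    using limsup by (rule reciprocal_slope_below_one_if_Limsup_less_1)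
  then interpret reciprocal_slope_below_one b b' q T .
  have "((\<lambda>t. 1 / ((b t)\<^sup>2 * (B t + 1))) \<longlongrightarrow> 0) at_top"
    if "\<not> (\<lambda>t. 1 / b t) integrable_on {0..}"
      and "\<exists>\<gamma>>0. \<exists>C>0. \<forall>t>0. \<bar>b' t\<bar> / (b t)\<^sup>2 \<le> C * (t + 1) powr (- \<gamma>)"
  proof -
    from that(2) obtain \<gamma> C where "0 < \<gamma>"
      and "\<And>t. 0 < t \<Longrightarrow> \<bar>b' t / (b t)\<^sup>2\<bar> \<le> C * (t + 1) powr (- \<gamma>)"
      by auto
    then have "((\<lambda>t. b' t / (b t)\<^sup>2) \<longlongrightarrow> 0) at_top"
      by (rule tendsto_zero_if_powr_decay)
    then show ?thesis
      using that(1) by (rule recip_b_sq_div_B_tendsto_zero)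
  qed
  then show ?thesis
    using E_integrable E_div_b_tendsto_zero unfolding E_def B_def by blast
qed

end
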